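(* Let $(\mathbb R^4,g)$ be the pp-wave $g=-(x^2+y^2)\,du^2+2\,du\,dv+dx^2+dy^2$ in coordinates $(u,v,x,y)$, and let $Z:=\tfrac12(H+k^2+h^2)\partial_v-\partial_u+k\partial_x+h\partial_y$ with $H=-x^2-y^2$, $k=-y$, $h=x$ (so $Z=-\partial_u-y\partial_x+x\partial_y$). Then $(\mathbb R^4,g,Z,\nabla u)$ is admissible (with $\nabla u=\partial_v$, $\tau=u$, $\ell=1$, and orientation such that $J=J_{g,Z,\nabla u}$ satisfies $JX=Y$ for $X:=k\partial_v+\partial_x$, $Y:=h\partial_v+\partial_y$), and the induced tensor $g_K=d(e^uZ^\flat)(\cdot,J\cdot)$ is a Kähler metric on all of $\mathbb R^4$.
   Context: Admissibility: an oriented semi-Riemannian $4$-manifold $(M,g)$ with vector fields $k_+,k_-$ (here $k_+=Z$, $k_-=\nabla u$) is admissible if $k_\pm$ are pointwise linearly independent, $\mathcal V:=\mathrm{span}(k_+,k_-)$ has spacelike orthogonal complement $\mathcal H$, and, with $J=J_{g,k_+,k_-}$ defined by $Jk_+=k_-$, $Jk_-=-k_+$, $Je_1=e_2$, $Je_2=-e_1$ for positively oriented orthonormal frames $(e_1,e_2)$ of $\mathcal H$: $[k_\pm,\Gamma(\mathcal H)]\subset\Gamma(\mathcal H)$; $J\circ\nabla^ok_+=\nabla^ok_-$ on $\mathcal H$, where $\nabla^oX$ is the trace-free symmetric part of $\mathcal H\to\mathcal H$, $v\mapsto(\nabla_vX)^{\mathcal H}$; $k_-=\ell\nabla\tau$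 for smooth $\ell,\tau$; and $\nabla(g(k_+,k_-))$, $\nabla(g(k_+,k_+))$ take values in $\mathcal V$. $Z^\flat=g(Z,\cdot)$. The induced metric $g_K:=d(f(\tau)k_+^\flat)(\cdot,J\cdot)$ is Kähler where $f\iota<0$ and $f'G/\ell-f\,dk_+^\flat(k_+,k_-)<0$, with $\iota=g(k_+,[e_1,e_2])$ and $G=g(k_+,k_+)g(k_-,k_-)-g(k_+,k_-)^2$. *)

theory Defs
  imports "HOL-Analysis.Analysis"
begin

text \<open>Points of R^4 are vectors of type real^4.  Coordinate convention:
  index 1 = u, index 2 = v, index 3 = x, index 4 = y (in the numeral type 4,
  the numeral 4 denotes the fourth element, equal to 0).
  Tangent vectors at a point are again elements of real^4 (components w.r.t.
  the coordinate frame).\<close>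

type_synonym pt = "real^4"

definition cu :: "pt \<Rightarrow> real" where "cu p = p $ 1"
definition cv :: "pt \<Rightarrow> real" where "cv p = p $ 2"
definition cx :: "pt \<Rightarrow> real" where "cx p = p $ 3"
definition cy :: "pt \<Rightarrow> real" where "cy p = p $ 4"

definition du :: pt where "du = axis 1 1"
definition dv :: pt where "dv = axis 2 1"
definition dx :: pt where "dx = axis 3 1"
definition dy :: pt where "dy = axis 4 1"

definition pd :: "(pt \<Rightarrow> real) \<Rightarrow> pt \<Rightarrow> 4 \<Rightarrow> real" where
  "pd f p i = deriv (\<lambda>t. f (p + t *\<^sub>R axis i 1)) 0"

coinductive smoothR :: "(pt \<Rightarrow> real) \<Rightarrow> bool" where
  "(\<forall>p. f differentiable (at p)) \<Longrightarrow> (\<forall>i. smoothR (\<lambda>p. pd f p i)) \<Longrightarrow> smoothR f"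

definition smoothV :: "(pt \<Rightarrow> pt) \<Rightarrow> bool" where
  "smoothV X \<longleftrightarrow> (\<forall>k. smoothR (\<lambda>p. X p $ k))"

text \<open>A metric is given by its Gram matrix field G (entries g(d_i,d_j)).\<close>
definition gmet :: "(pt \<Rightarrow> real^4^4) \<Rightarrow> pt \<Rightarrow> pt \<Rightarrow> pt \<Rightarrow> real" where
  "gmet G p v w = v \<bullet> (G p *v w)"

definition semi_riemannian :: "(pt \<Rightarrow> real^4^4) \<Rightarrow> bool" where
  "semi_riemannian G \<longleftrightarrow> (\<forall>i j. smoothR (\<lambda>p. G p $ i $ j)) \<and>
     (\<forall>p. transpose (G p) = G p \<and> det (G p) \<noteq> 0)"

definition ppwave :: "pt \<Rightarrow> real^4^4" where
  "ppwave p = (\<chi> i j.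
     if i = 1 \<and> j = 1 then - ((cx p)\<^sup>2 + (cy p)\<^sup>2)
     else if (i = 1 \<and> j = 2) \<or> (i = 2 \<and> j = 1) then 1
     else if i = j \<and> (i = 3 \<or> i = 4) then 1
     else 0)"

definition vder :: "(pt \<Rightarrow> pt) \<Rightarrow> (pt \<Rightarrow> real) \<Rightarrow> pt \<Rightarrow> real" where
  "vder X f p = (\<Sum>i\<in>UNIV. X p $ i * pd f p i)"

definition lie :: "(pt \<Rightarrow> pt) \<Rightarrow> (pt \<Rightarrow> pt) \<Rightarrow> pt \<Rightarrow> pt" where
  "lie X Y p = (\<chi> k. vder X (\<lambda>q. Y q $ k) p - vder Y (\<lambda>q. X q $ k) p)"

definition grad :: "(pt \<Rightarrow> real^4^4) \<Rightarrow> (pt \<Rightarrow> real) \<Rightarrow> pt \<Rightarrow> pt" where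
  "grad G f p = matrix_inv (G p) *v (\<chi> i. pd f p i)"

definition christ :: "(pt \<Rightarrow> real^4^4) \<Rightarrow> pt \<Rightarrow> 4 \<Rightarrow> 4 \<Rightarrow> 4 \<Rightarrow> real" where
  "christ G p k i j = (1/2) * (\<Sum>l\<in>UNIV. matrix_inv (G p) $ k $ l *
      (pd (\<lambda>q. G q $ j $ l) p i + pd (\<lambda>q. G q $ i $ l) p j - pd (\<lambda>q. G q $ i $ j) p l))"

text \<open>covd G X p v = (nabla_v X)(p) for the Levi-Civita connection of G.\<close>
definition covd :: "(pt \<Rightarrow> real^4^4) \<Rightarrow> (pt \<Rightarrow> pt) \<Rightarrow> pt \<Rightarrow> pt \<Rightarrow> pt" where
  "covd G X p v = (\<chi> k. (\<Sum>i\<in>UNIV. v $ i * pd (\<lambda>q. X q $ k) p i)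
      + (\<Sum>i\<in>UNIV. \<Sum>j\<in>UNIV. christ G p k i j * v $ i * X p $ j))"

definition Vsp :: "(pt \<Rightarrow> pt) \<Rightarrow> (pt \<Rightarrow> pt) \<Rightarrow> pt \<Rightarrow> pt set" where
  "Vsp kp km p = span {kp p, km p}"

definition Hsp :: "(pt \<Rightarrow> real^4^4) \<Rightarrow> (pt \<Rightarrow> pt) \<Rightarrow> (pt \<Rightarrow> pt) \<Rightarrow> pt \<Rightarrow> pt set" where
  "Hsp G kp km p = {w. gmet G p w (kp p) = 0 \<and> gmet G p w (km p) = 0}"

definition ONframe :: "(pt \<Rightarrow> real^4^4) \<Rightarrow> (pt \<Rightarrow> pt) \<Rightarrow> (pt \<Rightarrow> pt) \<Rightarrow> pt \<Rightarrow> pt \<Rightarrow> pt \<Rightarrow> bool" where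
  "ONframe G kp km p e1 e2 \<longleftrightarrow> e1 \<in> Hsp G kp km p \<and> e2 \<in> Hsp G kp km p \<and>
     gmet G p e1 e1 = 1 \<and> gmet G p e2 e2 = 1 \<and> gmet G p e1 e2 = 0"

text \<open>Orientation of R^4 given by a sign eps (1 = standard orientation, -1 = opposite);
  (e1,e2) is a positively oriented frame of H iff (k+,k-,e1,e2) is positively oriented.\<close>
definition posONframe :: "(pt \<Rightarrow> real^4^4) \<Rightarrow> (pt \<Rightarrow> pt) \<Rightarrow> (pt \<Rightarrow> pt) \<Rightarrow> real \<Rightarrow> pt \<Rightarrow> pt \<Rightarrow> pt \<Rightarrow> bool" where
  "posONframe G kp km eps p e1 e2 \<longleftrightarrow> ONframe G kp km p e1 e2 \<and>
     eps * det (vector [kp p, km p, e1, e2] :: real^4^4) > 0"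

definition Jop :: "(pt \<Rightarrow> real^4^4) \<Rightarrow> (pt \<Rightarrow> pt) \<Rightarrow> (pt \<Rightarrow> pt) \<Rightarrow> real \<Rightarrow> pt \<Rightarrow> pt \<Rightarrow> pt" where
  "Jop G kp km eps p = (THE Jm. linear Jm \<and> Jm (kp p) = km p \<and> Jm (km p) = - kp p \<and>
     (\<forall>e1 e2. posONframe G kp km eps p e1 e2 \<longrightarrow> Jm e1 = e2 \<and> Jm e2 = - e1))"

text \<open>Trace-free symmetric part nabla^o X of H -> H, v |-> (nabla_v X)^H.\<close>
definition bsym :: "(pt \<Rightarrow> real^4^4) \<Rightarrow> (pt \<Rightarrow> pt) \<Rightarrow> pt \<Rightarrow> pt \<Rightarrow> pt \<Rightarrow> real" where
  "bsym G X p v w = (gmet G p (covd G X p v) w + gmet G p (covd G X p w) v) / 2"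

definition trH :: "(pt \<Rightarrow> real^4^4) \<Rightarrow> (pt \<Rightarrow> pt) \<Rightarrow> (pt \<Rightarrow> pt) \<Rightarrow> (pt \<Rightarrow> pt) \<Rightarrow> pt \<Rightarrow> real" where
  "trH G kp km X p = (let (e1, e2) = (SOME (e1, e2). ONframe G kp km p e1 e2)
     in bsym G X p e1 e1 + bsym G X p e2 e2)"

definition nabla0 :: "(pt \<Rightarrow> real^4^4) \<Rightarrow> (pt \<Rightarrow> pt) \<Rightarrow> (pt \<Rightarrow> pt) \<Rightarrow> (pt \<Rightarrow> pt) \<Rightarrow> pt \<Rightarrow> pt \<Rightarrow> pt" where
  "nabla0 G kp km X p v = (THE a. a \<in> Hsp G kp km p \<and>
     (\<forall>w\<in>Hsp G kp km p. gmet G p a w = bsym G X p v w - trH G kp km X p / 2 * gmet G p v w))"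

definition admissible :: "(pt \<Rightarrow> real^4^4) \<Rightarrow> real \<Rightarrow> (pt \<Rightarrow> pt) \<Rightarrow> (pt \<Rightarrow> pt) \<Rightarrow> bool" where
  "admissible G eps kp km \<longleftrightarrow>
     semi_riemannian G \<and> eps \<in> {1, -1} \<and> smoothV kp \<and> smoothV km \<and>
     (\<forall>p a b. a *\<^sub>R kp p + b *\<^sub>R km p = 0 \<longrightarrow> a = 0 \<and> b = 0) \<and>
     (\<forall>p. \<forall>w\<in>Hsp G kp km p. w \<noteq> 0 \<longrightarrow> gmet G p w w > 0) \<and>
     (\<forall>W. smoothV W \<and> (\<forall>q. W q \<in> Hsp G kp km q) \<longrightarrow>
        (\<forall>q. lie kp W q \<in> Hsp G kp km q \<and> lie km W q \<in> Hsp G kp km q)) \<and>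
     (\<forall>p. \<forall>v\<in>Hsp G kp km p. Jop G kp km eps p (nabla0 G kp km kp p v) = nabla0 G kp km km p v) \<and>
     (\<exists>l tau. smoothR l \<and> smoothR tau \<and> (\<forall>p. km p = l p *\<^sub>R grad G tau p)) \<and>
     (\<forall>p. grad G (\<lambda>q. gmet G q (kp q) (km q)) p \<in> Vsp kp km p) \<and>
     (\<forall>p. grad G (\<lambda>q. gmet G q (kp q) (kp q)) p \<in> Vsp kp km p)"

definition dform1 :: "(pt \<Rightarrow> real^4) \<Rightarrow> pt \<Rightarrow> pt \<Rightarrow> pt \<Rightarrow> real" where
  "dform1 a p v w = (\<Sum>i\<in>UNIV. \<Sum>j\<in>UNIV.
      (pd (\<lambda>q. a q $ j) p i - pd (\<lambda>q. a q $ i) p j) * v $ i * w $ j)"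

definition flat :: "(pt \<Rightarrow> real^4^4) \<Rightarrow> (pt \<Rightarrow> pt) \<Rightarrow> pt \<Rightarrow> real^4" where
  "flat G X p = (\<chi> i. gmet G p (X p) (axis i 1))"

text \<open>Kaehler pair (gK, J) on all of R^4: J a complex structure (almost complex and
  Nijenhuis tensor zero), gK a smooth Riemannian metric, J-invariant, with closed
  fundamental 2-form omega(X,Y) = gK(JX,Y).\<close>
definition kaehler :: "(pt \<Rightarrow> pt \<Rightarrow> pt \<Rightarrow> real) \<Rightarrow> (pt \<Rightarrow> pt \<Rightarrow> pt) \<Rightarrow> bool" where
  "kaehler gK J \<longleftrightarrow>
     (\<forall>i k. smoothR (\<lambda>p. J p (axis i 1) $ k)) \<and>
     (\<forall>i j. smoothR (\<lambda>p. gK p (axis i 1) (axis j 1))) \<and>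
     (\<forall>p. linear (J p) \<and> (\<forall>v. J p (J p v) = - v)) \<and>
     (\<forall>p. bilinear (gK p) \<and> (\<forall>v w. gK p v w = gK p w v) \<and> (\<forall>v. v \<noteq> 0 \<longrightarrow> gK p v v > 0)) \<and>
     (\<forall>p v w. gK p (J p v) (J p w) = gK p v w) \<and>
     (\<forall>X Y. smoothV X \<and> smoothV Y \<longrightarrow>
        (let JX = (\<lambda>q. J q (X q)); JY = (\<lambda>q. J q (Y q)) in
         \<forall>p. lie JX JY p - J p (lie JX Y p) - J p (lie X JY p) - lie X Y p = 0)) \<and>
     (\<forall>X Y Z. smoothV X \<and> smoothV Y \<and> smoothV Z \<longrightarrow>
        (let om = (\<lambda>A B q. gK q (J q (A q)) (B q)) in
         \<forall>p. vder X (om Y Z) p - vder Y (om X Z) p + vder Z (om X Y) p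
             - om (lie X Y) Z p + om (lie X Z) Y p - om (lie Y Z) X p = 0))"

definition Zf :: "pt \<Rightarrow> pt" where
  "Zf p = (let H = - (cx p)\<^sup>2 - (cy p)\<^sup>2; k = - cy p; h = cx p in
     ((H + k\<^sup>2 + h\<^sup>2) / 2) *\<^sub>R dv - du + k *\<^sub>R dx + h *\<^sub>R dy)"

definition Xf :: "pt \<Rightarrow> pt" where "Xf p = (- cy p) *\<^sub>R dv + dx"
definition Yf :: "pt \<Rightarrow> pt" where "Yf p = (cx p) *\<^sub>R dv + dy"

end

theory Submission
  imports Defs
begin

text \<open>\<open>Z = -\<partial>\<^sub>u - y\<partial>\<^sub>x + x\<partial>\<^sub>y\<close> and \<open>\<nabla>u = \<partial>\<^sub>v\<close> are Killing fields of the pp-wave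
  (a \<open>u\<close>-translation combined with a rotation of the \<open>(x,y)\<close>-plane, and a \<open>v\<close>-translation),
  with \<open>g(Z,\<partial>\<^sub>v) = -1\<close> and \<open>g(Z,Z) = 0\<close>. Hence the symmetrised covariant derivatives of
  \<open>k\<^sub>\<plusminus>\<close> vanish, so \<open>\<nabla>\<^sup>ok\<^sub>\<plusminus> = 0\<close> and the compatibility with \<open>J\<close> is trivial, and the
  gradient conditions hold because the relevant functions are constant. The orthogonal
  complement \<open>H\<close> is spanned by the orthonormal fields \<open>X, Y\<close>, so \<open>J\<close> is an explicit matrix
  field, whose Nijenhuis tensor vanishes by direct computation. The Gram matrix of \<open>g\<^sub>K\<close> is \<open>e\<^sup>u\<close> times a
  sum of four squares, so \<open>g\<^sub>K\<close> is positive definite; by \<open>J\<close>-invariance its fundamental form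
  equals the exact form \<open>d(e\<^sup>uZ\<^sup>\<flat>)\<close>, hence is closed.\<close>

section \<open>Partial derivatives\<close>

lemma pd_eq_has_derivative:
  assumes "(f has_derivative D) (at p)"
  shows "pd f p i = D (axis i 1)"
proof -
  have lin: "linear D" using assms has_derivative_linear by blast
  have line: "((\<lambda>t::real. p + t *\<^sub>R axis i 1) has_derivative (\<lambda>t. t *\<^sub>R axis i 1)) (at 0)"
    by (auto intro!: derivative_eq_intros)
  have "(f has_derivative D) (at (p + 0 *\<^sub>R axis i 1))" using assms by simp
  from has_derivative_compose[OF line this]
  have "((\<lambda>t. f (p + t *\<^sub>R axis i 1)) has_derivative (\<lambda>t. D (t *\<^sub>R axis i 1))) (at 0)"
    by simp
  moreover have "(\<lambda>t. D (t *\<^sub>R axis i 1)) = (\<lambda>t. D (axis i 1) * t)"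
    using lin by (auto simp: linear_scale mult.commute)
  ultimately have "((\<lambda>t. f (p + t *\<^sub>R axis i 1)) has_real_derivative D (axis i 1)) (at 0)"
    by (simp add: has_field_derivative_def)
  then show ?thesis unfolding pd_def by (rule DERIV_imp_deriv)
qed

lemma pd_const [simp]: "pd (\<lambda>q. c) p i = 0"
  by (rule pd_eq_has_derivative[where D="\<lambda>_. 0", simplified]) (rule has_derivative_const)

lemma pd_coord [simp]: "pd (\<lambda>q. q $ j) p i = (if j = i then 1 else 0)"
proof -
  have "((\<lambda>q::pt. q $ j) has_derivative (\<lambda>q. q $ j)) (at p)"
    by (rule bounded_linear_imp_has_derivative) (rule bounded_linear_vec_nth)
  from pd_eq_has_derivative[OF this] show ?thesis by (simp add: axis_def)
qed

lemma pd_exp_coord [simp]: "pd (\<lambda>q. exp (q $ j)) p i = (if i = j then exp (p $ j) else 0)"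
proof -
  have "((\<lambda>q::pt. exp (q $ j)) has_derivative (\<lambda>h. exp (p $ j) * h $ j)) (at p)"
    by (auto intro!: derivative_eq_intros bounded_linear_imp_has_derivative)
  from pd_eq_has_derivative[OF this] show ?thesis by (auto simp: axis_def)
qed

lemma pd_add [simp]:
  assumes "f differentiable (at p)" "g differentiable (at p)"
  shows "pd (\<lambda>q. f q + g q) p i = pd f p i + pd g p i"
proof -
  obtain D E where D: "(f has_derivative D) (at p)" and E: "(g has_derivative E) (at p)"
    using assms unfolding differentiable_def by blast
  show ?thesis
    using pd_eq_has_derivative[OF has_derivative_add[OF D E]]
      pd_eq_has_derivative[OF D] pd_eq_has_derivative[OF E] by simp
qed

lemma pd_mult [simp]:
  assumes "f differentiable (at p)" "g differentiable (at p)"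
  shows "pd (\<lambda>q. f q * g q) p i = f p * pd g p i + pd f p i * g p"
proof -
  obtain D E where D: "(f has_derivative D) (at p)" and E: "(g has_derivative E) (at p)"
    using assms unfolding differentiable_def by blast
  show ?thesis
    using pd_eq_has_derivative[OF has_derivative_mult[OF D E]]
      pd_eq_has_derivative[OF D] pd_eq_has_derivative[OF E] by simp
qed

lemma pd_uminus [simp]:
  assumes "f differentiable (at p)"
  shows "pd (\<lambda>q. - f q) p i = - pd f p i"
proof -
  obtain D where D: "(f has_derivative D) (at p)"
    using assms unfolding differentiable_def by blast
  show ?thesis
    using pd_eq_has_derivative[OF has_derivative_minus[OF D]] pd_eq_has_derivative[OF D] by simp
qed

lemma pd_diff [simp]:
  assumes "f differentiable (at p)" "g differentiable (at p)"
  shows "pd (\<lambda>q. f q - g q) p i = pd f p i - pd g p i"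
  using assms pd_add[of f p "\<lambda>q. - g q" i] by (simp add: differentiable_minus)

lemma pd_sum:
  assumes "finite S" "\<And>s. s \<in> S \<Longrightarrow> f s differentiable (at p)"
  shows "pd (\<lambda>q. \<Sum>s\<in>S. f s q) p i = (\<Sum>s\<in>S. pd (f s) p i)"
  using assms
proof (induction S rule: finite_induct)
  case empty
  then show ?case by simp
next
  case (insert x F)
  have "(\<lambda>q. \<Sum>s\<in>F. f s q) differentiable (at p)"
    using insert by (intro differentiable_sum) auto
  then show ?case using insert by simp
qed

lemma smoothR_differentiable: "smoothR f \<Longrightarrow> f differentiable (at p)"
  by (erule smoothR.cases) auto

lemma smoothV_differentiable: "smoothV X \<Longrightarrow> (\<lambda>q. X q $ k) differentiable (at p)"
  unfolding smoothV_def using smoothR_differentiable by blast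

inductive exp_poly :: "(pt \<Rightarrow> real) \<Rightarrow> bool" where
  exp_poly_const: "exp_poly (\<lambda>q. c)"
| exp_poly_coord: "exp_poly (\<lambda>q. q $ i)"
| exp_poly_exp_coord: "exp_poly (\<lambda>q. exp (q $ i))"
| exp_poly_add: "exp_poly f \<Longrightarrow> exp_poly g \<Longrightarrow> exp_poly (\<lambda>q. f q + g q)"
| exp_poly_mult: "exp_poly f \<Longrightarrow> exp_poly g \<Longrightarrow> exp_poly (\<lambda>q. f q * g q)"

lemma exp_poly_uminus: "exp_poly f \<Longrightarrow> exp_poly (\<lambda>q. - f q)"
  using exp_poly_mult[OF exp_poly_const[of "-1"], of f] by simp

lemma exp_poly_diff: "exp_poly f \<Longrightarrow> exp_poly g \<Longrightarrow> exp_poly (\<lambda>q. f q - g q)"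
  using exp_poly_add[OF _ exp_poly_uminus[of g], of f] by simp

lemmas exp_poly_closure [simp] = exp_poly.intros exp_poly_uminus exp_poly_diff

lemma exp_poly_differentiable [simp]: "exp_poly f \<Longrightarrow> f differentiable (at p)"
proof (induction rule: exp_poly.induct)
  case (exp_poly_coord i)
  show ?case using bounded_linear_imp_differentiable[OF bounded_linear_vec_nth] .
next
  case (exp_poly_exp_coord i)
  have "((\<lambda>q::pt. exp (q $ i)) has_derivative (\<lambda>h. exp (p $ i) * h $ i)) (at p)"
    by (auto intro!: derivative_eq_intros bounded_linear_imp_has_derivative)
  then show ?case unfolding differentiable_def by blast
qed auto

lemma exp_poly_pd: "exp_poly f \<Longrightarrow> exp_poly (\<lambda>p. pd f p i)"
proof (induction rule: exp_poly.induct)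
  case (exp_poly_exp_coord j)
  show ?case by (cases "i = j") auto
qed auto

lemma exp_poly_smoothR: "exp_poly f \<Longrightarrow> smoothR f"
  by (coinduction arbitrary: f rule: smoothR.coinduct) (auto intro: exp_poly_pd)

lemma det_4:
  "det (A::'a::comm_ring_1^4^4) =
    A$1$1*A$2$2*A$3$3*A$4$4 - A$1$1*A$2$2*A$3$4*A$4$3 - A$1$1*A$2$3*A$3$2*A$4$4
  + A$1$1*A$2$3*A$3$4*A$4$2 + A$1$1*A$2$4*A$3$2*A$4$3 - A$1$1*A$2$4*A$3$3*A$4$2
  - A$1$2*A$2$1*A$3$3*A$4$4 + A$1$2*A$2$1*A$3$4*A$4$3 + A$1$2*A$2$3*A$3$1*A$4$4
  - A$1$2*A$2$3*A$3$4*A$4$1 - A$1$2*A$2$4*A$3$1*A$4$3 + A$1$2*A$2$4*A$3$3*A$4$1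
  + A$1$3*A$2$1*A$3$2*A$4$4 - A$1$3*A$2$1*A$3$4*A$4$2 - A$1$3*A$2$2*A$3$1*A$4$4
  + A$1$3*A$2$2*A$3$4*A$4$1 + A$1$3*A$2$4*A$3$1*A$4$2 - A$1$3*A$2$4*A$3$2*A$4$1
  - A$1$4*A$2$1*A$3$2*A$4$3 + A$1$4*A$2$1*A$3$3*A$4$2 + A$1$4*A$2$2*A$3$1*A$4$3
  - A$1$4*A$2$2*A$3$3*A$4$1 - A$1$4*A$2$3*A$3$1*A$4$2 + A$1$4*A$2$3*A$3$2*A$4$1"
proof -
  have f1: "finite {2::4, 3, 4}" "1 \<notin> {2::4, 3, 4}" by auto
  have f2: "finite {3::4, 4}" "2 \<notin> {3::4, 4}" by auto
  have f3: "finite {4::4}" "3 \<notin> {4::4}" by auto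
  show ?thesis
    unfolding det_def UNIV_4
    unfolding sum_over_permutations_insert[OF f1] sum_over_permutations_insert[OF f2]
      sum_over_permutations_insert[OF f3] permutes_sing
    by (simp add: sign_swap_id permutation_swap_id permutation_compose sign_compose sign_id
        swap_id_eq algebra_simps)
qed

lemma vec4_eq_iff: "(v::'a^4) = w \<longleftrightarrow> v$1 = w$1 \<and> v$2 = w$2 \<and> v$3 = w$3 \<and> v$4 = w$4"
  by (simp add: vec_eq_iff forall_4)

lemma mat4_eq_iff:
  "(A::'a^4^4) = B \<longleftrightarrow>
    A$1$1 = B$1$1 \<and> A$1$2 = B$1$2 \<and> A$1$3 = B$1$3 \<and> A$1$4 = B$1$4 \<and>
    A$2$1 = B$2$1 \<and> A$2$2 = B$2$2 \<and> A$2$3 = B$2$3 \<and> A$2$4 = B$2$4 \<and>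
    A$3$1 = B$3$1 \<and> A$3$2 = B$3$2 \<and> A$3$3 = B$3$3 \<and> A$3$4 = B$3$4 \<and>
    A$4$1 = B$4$1 \<and> A$4$2 = B$4$2 \<and> A$4$3 = B$4$3 \<and> A$4$4 = B$4$4"
  by (simp add: vec_eq_iff forall_4 conj_ac)

lemma matrix_inv_eq:
  fixes A :: "'a::semiring_1^'n^'n"
  assumes AB: "A ** B = mat 1" and BA: "B ** A = mat 1"
  shows "matrix_inv A = B"
proof -
  have "\<exists>A'. A ** A' = mat 1 \<and> A' ** A = mat 1" using AB BA by blast
  then have inv: "A ** matrix_inv A = mat 1 \<and> matrix_inv A ** A = mat 1"
    unfolding matrix_inv_def by (rule someI_ex)
  have "matrix_inv A = matrix_inv A ** (A ** B)" using AB by simp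
  also have "\<dots> = B" using inv by (simp add: matrix_mul_assoc)
  finally show ?thesis .
qed

lemma matrix_vector_mult_uminus_left: "(- A) *v x = - (A *v (x::'a::ring_1^'n))"
  by (simp add: matrix_vector_mult_def vec_eq_iff sum_negf)

lemma matrix_vector_mult_uminus_right: "A *v (- x) = - (A *v (x::'a::ring_1^'n))"
  by (simp add: matrix_vector_mult_def vec_eq_iff sum_negf)

lemma inner_matrix_vector_transpose: "v \<bullet> (A *v w) = (transpose A *v v) \<bullet> (w::real^'n)"
  by (simp add: dot_lmul_matrix)

lemma inner_matrix_symmetric:
  "transpose A = A \<Longrightarrow> v \<bullet> (A *v w) = w \<bullet> (A *v (v::real^'n))"
  by (subst inner_matrix_vector_transpose) (simp add: inner_commute)

lemma inner_matrix_antisymmetric: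
  "transpose A = - A \<Longrightarrow> v \<bullet> (A *v w) = - (w \<bullet> (A *v (v::real^'n)))"
  by (subst inner_matrix_vector_transpose) (simp add: matrix_vector_mult_uminus_left inner_commute)

lemma inner_complex_structure_invariant:
  fixes J F :: "real^'n^'n"
  assumes J2: "\<And>v. J *v (J *v v) = - v"
    and F_anti: "transpose F = - F" and FJ_sym: "transpose (F ** J) = F ** J"
  shows "(J *v a) \<bullet> (F *v (J *v b)) = a \<bullet> (F *v b)"
proof -
  have "(J *v a) \<bullet> (F *v (J *v b)) = (J *v a) \<bullet> ((F ** J) *v b)"
    by (simp add: matrix_vector_mul_assoc[symmetric])
  also have "\<dots> = b \<bullet> ((F ** J) *v (J *v a))" by (rule inner_matrix_symmetric[OF FJ_sym])
  also have "\<dots> = b \<bullet> (F *v (J *v (J *v a)))" by (simp add: matrix_vector_mul_assoc[symmetric])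
  also have "\<dots> = - (b \<bullet> (F *v a))" by (simp add: J2 matrix_vector_mult_uminus_right)
  also have "\<dots> = a \<bullet> (F *v b)" using inner_matrix_antisymmetric[OF F_anti, of a b] by simp
  finally show ?thesis .
qed

definition jac :: "(pt \<Rightarrow> pt) \<Rightarrow> pt \<Rightarrow> real^4^4" where
  "jac X p = (\<chi> k i. pd (\<lambda>q. X q $ k) p i)"

definition mat_dir_deriv :: "(pt \<Rightarrow> real^4^4) \<Rightarrow> pt \<Rightarrow> pt \<Rightarrow> real^4^4" where
  "mat_dir_deriv A p v = (\<chi> k j. \<Sum>i\<in>UNIV. v$i * pd (\<lambda>q. A q $ k $ j) p i)"

lemma lie_eq_jac: "lie X Y p = jac Y p *v X p - jac X p *v Y p"
  by (simp add: lie_def vder_def jac_def matrix_vector_mult_def vec_eq_iff mult.commute)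

lemma jac_matrix_vector_mult:
  assumes dA: "\<And>k j. (\<lambda>q. A q $ k $ j) differentiable (at p)"
    and dX: "\<And>j. (\<lambda>q. X q $ j) differentiable (at p)"
  shows "jac (\<lambda>q. A q *v X q) p *v v = mat_dir_deriv A p v *v X p + A p *v (jac X p *v v)"
proof -
  have "\<And>k. (\<lambda>q. (A q *v X q) $ k) = (\<lambda>q. A q $ k $ 1 * X q $ 1 + A q $ k $ 2 * X q $ 2
       + A q $ k $ 3 * X q $ 3 + A q $ k $ 4 * X q $ 4)"
    by (simp add: matrix_vector_mult_def sum_4)
  then show ?thesis
    by (simp add: vec4_eq_iff jac_def mat_dir_deriv_def matrix_vector_mult_def sum_4 dA dX algebra_simps)
qed

lemma vder_inner_matrix_vector_mult:
  assumes dA: "\<And>k j. (\<lambda>q. A q $ k $ j) differentiable (at p)"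
    and dY: "\<And>j. (\<lambda>q. Y q $ j) differentiable (at p)"
    and dZ: "\<And>j. (\<lambda>q. Z q $ j) differentiable (at p)"
  shows "vder X (\<lambda>q. Y q \<bullet> (A q *v Z q)) p = (jac Y p *v X p) \<bullet> (A p *v Z p)
     + Y p \<bullet> (mat_dir_deriv A p (X p) *v Z p) + Y p \<bullet> (A p *v (jac Z p *v X p))"
proof -
  have expand: "(\<lambda>q. Y q \<bullet> (A q *v Z q))
      = (\<lambda>q. \<Sum>i\<in>UNIV. \<Sum>j\<in>UNIV. Y q $ i * (A q $ i $ j * Z q $ j))"
    by (simp add: inner_vec_def matrix_vector_mult_def sum_distrib_left)
  have d1: "\<And>i j. (\<lambda>q. Y q $ i * (A q $ i $ j * Z q $ j)) differentiable (at p)"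
    using dA dY dZ by simp
  have d2: "\<And>i. (\<lambda>q. \<Sum>j\<in>UNIV. Y q $ i * (A q $ i $ j * Z q $ j)) differentiable (at p)"
    using d1 by (intro differentiable_sum) auto
  show ?thesis
    unfolding expand vder_def
    by (simp add: pd_sum d1 d2 dA dY dZ jac_def mat_dir_deriv_def inner_vec_def matrix_vector_mult_def
        sum_4 algebra_simps)
qed

text \<open>The derivatives of \<open>X\<close> and \<open>Y\<close> cancel (this uses \<open>A\<^sup>2 = -1\<close>), leaving the expression
  in \<open>integrable\<close>.\<close>

lemma nijenhuis_matrix_field_eq_0:
  assumes dA: "\<And>k j. (\<lambda>q. A q $ k $ j) differentiable (at p)"
    and dX: "\<And>j. (\<lambda>q. X q $ j) differentiable (at p)"
    and dY: "\<And>j. (\<lambda>q. Y q $ j) differentiable (at p)"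
    and A2: "\<And>v. A p *v (A p *v v) = - v"
    and integrable: "\<And>a b. mat_dir_deriv A p (A p *v a) *v b - mat_dir_deriv A p (A p *v b) *v a
        + A p *v (mat_dir_deriv A p b *v a) - A p *v (mat_dir_deriv A p a *v b) = 0"
  shows "lie (\<lambda>q. A q *v X q) (\<lambda>q. A q *v Y q) p - A p *v lie (\<lambda>q. A q *v X q) Y p
     - A p *v lie X (\<lambda>q. A q *v Y q) p - lie X Y p = 0"
proof -
  have "lie (\<lambda>q. A q *v X q) (\<lambda>q. A q *v Y q) p - A p *v lie (\<lambda>q. A q *v X q) Y p
     - A p *v lie X (\<lambda>q. A q *v Y q) p - lie X Y p =
     mat_dir_deriv A p (A p *v X p) *v Y p - mat_dir_deriv A p (A p *v Y p) *v X p
   + A p *v (mat_dir_deriv A p (Y p) *v X p) - A p *v (mat_dir_deriv A p (X p) *v Y p)"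
    by (simp add: lie_eq_jac jac_matrix_vector_mult[OF dA dX] jac_matrix_vector_mult[OF dA dY]
        A2 algebra_simps)
  then show ?thesis using integrable by simp
qed

lemma exterior_derivative_matrix_two_form_eq_0:
  assumes dF: "\<And>k j. (\<lambda>q. F q $ k $ j) differentiable (at p)"
    and dX: "\<And>j. (\<lambda>q. X q $ j) differentiable (at p)"
    and dY: "\<And>j. (\<lambda>q. Y q $ j) differentiable (at p)"
    and dZ: "\<And>j. (\<lambda>q. Z q $ j) differentiable (at p)"
    and F_anti: "transpose (F p) = - F p"
    and closed: "\<And>a b c. b \<bullet> (mat_dir_deriv F p a *v c) - a \<bullet> (mat_dir_deriv F p b *v c)
        + a \<bullet> (mat_dir_deriv F p c *v b) = 0"
  shows "vder X (\<lambda>q. Y q \<bullet> (F q *v Z q)) p - vder Y (\<lambda>q. X q \<bullet> (F q *v Z q)) p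
     + vder Z (\<lambda>q. X q \<bullet> (F q *v Y q)) p
     - lie X Y p \<bullet> (F p *v Z p) + lie X Z p \<bullet> (F p *v Y p) - lie Y Z p \<bullet> (F p *v X p) = 0"
proof -
  note anti = inner_matrix_antisymmetric[OF F_anti]
  show ?thesis
    unfolding vder_inner_matrix_vector_mult[OF dF dY dZ] vder_inner_matrix_vector_mult[OF dF dX dZ]
      vder_inner_matrix_vector_mult[OF dF dX dY] lie_eq_jac
    using anti[of "Y p" "jac Z p *v X p"] anti[of "X p" "jac Z p *v Y p"]
      anti[of "X p" "jac Y p *v Z p"] closed[where a="X p" and b="Y p" and c="Z p"]
    by (simp add: inner_diff_left)
qed

section \<open>The pp-wave metric\<close>

lemma ppwave_nth: "ppwave p $ i $ j =
    (if i = 1 \<and> j = 1 then - (p$3*p$3 + p$4*p$4)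
     else if (i = 1 \<and> j = 2) \<or> (i = 2 \<and> j = 1) then 1
     else if i = j \<and> (i = 3 \<or> i = 4) then 1 else 0)"
  by (simp add: ppwave_def cx_def cy_def power2_eq_square)

definition ppwave_inv :: "pt \<Rightarrow> real^4^4" where
  "ppwave_inv p = (\<chi> i j. if (i = 1 \<and> j = 2) \<or> (i = 2 \<and> j = 1) then 1
     else if i = 2 \<and> j = 2 then p$3*p$3 + p$4*p$4
     else if i = j \<and> (i = 3 \<or> i = 4) then 1 else 0)"

lemma matrix_inv_ppwave: "matrix_inv (ppwave p) = ppwave_inv p"
  by (rule matrix_inv_eq)
    (simp_all add: mat4_eq_iff matrix_matrix_mult_def sum_4 ppwave_nth ppwave_inv_def mat_def)

lemma gmet_ppwave:
  "gmet ppwave p v w = - (p$3*p$3 + p$4*p$4) * v$1 * w$1 + v$1 * w$2 + v$2 * w$1 + v$3 * w$3 + v$4 * w$4"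
  by (simp add: gmet_def inner_vec_def matrix_vector_mult_def sum_4 ppwave_nth algebra_simps)

lemma du_nth: "du $ k = (if k = 1 then 1 else 0)" by (simp add: du_def axis_def)
lemma dv_nth: "dv $ k = (if k = 2 then 1 else 0)" by (simp add: dv_def axis_def)
lemma dx_nth: "dx $ k = (if k = 3 then 1 else 0)" by (simp add: dx_def axis_def)
lemma dy_nth: "dy $ k = (if k = 4 then 1 else 0)" by (simp add: dy_def axis_def)

lemma Zf_nth: "Zf p $ k = (if k = 1 then -1 else if k = 3 then - p$4 else if k = 4 then p$3 else 0)"
  by (simp add: Zf_def Let_def cx_def cy_def dv_nth du_nth dx_nth dy_nth)

lemma Xf_nth: "Xf p $ k = (if k = 2 then - p$4 else if k = 3 then 1 else 0)"
  by (simp add: Xf_def cy_def dv_nth dx_nth)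

lemma Yf_nth: "Yf p $ k = (if k = 2 then p$3 else if k = 4 then 1 else 0)"
  by (simp add: Yf_def cx_def dv_nth dy_nth)

lemma cu_eq_coord: "cu = (\<lambda>q. q $ 1)"
  by (auto simp: cu_def)

lemma grad_ppwave_cu: "grad ppwave cu = (\<lambda>p. dv)"
  by (auto simp: grad_def cu_eq_coord matrix_inv_ppwave vec4_eq_iff matrix_vector_mult_def sum_4
      ppwave_inv_def dv_nth)

lemma pd_ppwave: "pd (\<lambda>q. ppwave q $ j $ l) p i =
    (if j = 1 \<and> l = 1 then (if i = 3 then -2 * p$3 else if i = 4 then -2 * p$4 else 0) else 0)"
proof (cases "j = 1 \<and> l = 1")
  case True
  then have "(\<lambda>q. ppwave q $ j $ l) = (\<lambda>q. - (q$3*q$3 + q$4*q$4))" by (auto simp: ppwave_nth)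
  then show ?thesis using True by auto
next
  case False
  then have "(\<lambda>q. ppwave q $ j $ l) = (\<lambda>q. ppwave 0 $ j $ l)" by (auto simp: ppwave_nth)
  then show ?thesis using False by auto
qed

definition ppwave_christ :: "pt \<Rightarrow> 4 \<Rightarrow> 4 \<Rightarrow> 4 \<Rightarrow> real" where
  "ppwave_christ p k i j =
    (if k = 2 \<and> ((i = 1 \<and> j = 3) \<or> (i = 3 \<and> j = 1)) then - p$3
     else if k = 2 \<and> ((i = 1 \<and> j = 4) \<or> (i = 4 \<and> j = 1)) then - p$4
     else if k = 3 \<and> i = 1 \<and> j = 1 then p$3
     else if k = 4 \<and> i = 1 \<and> j = 1 then p$4 else 0)"

lemma christ_ppwave: "christ ppwave p k i j = ppwave_christ p k i j"
  unfolding christ_def matrix_inv_ppwave sum_4 pd_ppwave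
  using exhaust_4[of k] exhaust_4[of i] exhaust_4[of j]
  by (elim disjE) (simp_all add: ppwave_inv_def ppwave_christ_def)

lemma covd_ppwave_Zf: "covd ppwave Zf p v =
   (\<chi> k. if k = 2 then p$3 * v$3 + p$4 * v$4
         else if k = 3 then - p$3 * v$1 - v$4
         else if k = 4 then - p$4 * v$1 + v$3 else 0)"
  by (simp add: covd_def christ_ppwave vec4_eq_iff sum_4 Zf_nth ppwave_christ_def algebra_simps)

lemma covd_ppwave_dv: "covd ppwave (\<lambda>p. dv) p v = 0"
  by (simp add: covd_def christ_ppwave vec4_eq_iff sum_4 dv_nth ppwave_christ_def)

lemma bsym_ppwave_Zf: "bsym ppwave Zf p v w = 0"
  by (simp add: bsym_def covd_ppwave_Zf gmet_ppwave algebra_simps)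

lemma bsym_ppwave_dv: "bsym ppwave (\<lambda>p. dv) p v w = 0"
  by (simp add: bsym_def covd_ppwave_dv gmet_def)

lemma Hsp_ppwave_iff: "w \<in> Hsp ppwave Zf (\<lambda>p. dv) p \<longleftrightarrow> w$1 = 0 \<and> w$2 = - p$4 * w$3 + p$3 * w$4"
  by (auto simp: Hsp_def gmet_ppwave Zf_nth dv_nth algebra_simps)

lemma Hsp_ppwave_pos:
  assumes "w \<in> Hsp ppwave Zf (\<lambda>p. dv) p" "w \<noteq> 0"
  shows "gmet ppwave p w w > 0"
proof -
  have w: "w$1 = 0" "w$2 = - p$4 * w$3 + p$3 * w$4" using assms(1) by (auto simp: Hsp_ppwave_iff)
  with assms(2) have "w$3 \<noteq> 0 \<or> w$4 \<noteq> 0" by (auto simp: vec4_eq_iff)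
  then have "w$3 * w$3 + w$4 * w$4 > 0" by (simp add: sum_squares_gt_zero_iff)
  then show ?thesis using w by (simp add: gmet_ppwave)
qed

section \<open>The complex structure\<close>

text \<open>The coordinate matrix of the linear map with \<open>Z \<mapsto> \<partial>\<^sub>v\<close>, \<open>\<partial>\<^sub>v \<mapsto> -Z\<close>, \<open>X \<mapsto> Y\<close>, \<open>Y \<mapsto> -X\<close>.\<close>

definition Jmat :: "pt \<Rightarrow> real^4^4" where
  "Jmat p = (let x = p$3; y = p$4; r = x*x + y*y in (\<chi> k j.
     if k = 1 then (if j = 1 then -r else if j = 2 then 1 else if j = 3 then y else -x)
     else if k = 2 then (if j = 1 then -1 else if j = 2 then 0 else if j = 3 then x else y)
     else if k = 3 then (if j = 1 then -x - r*y else if j = 2 then y else if j = 3 then y*y else -1-x*y)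
     else (if j = 1 then -y + r*x else if j = 2 then -x else if j = 3 then 1 - x*y else x*x)))"

lemma Jmat_mult: "Jmat p *v w = (\<chi> k.
   if k = 1 then -(p$3*p$3 + p$4*p$4) * w$1 + w$2 + p$4 * w$3 - p$3 * w$4
   else if k = 2 then - w$1 + p$3 * w$3 + p$4 * w$4
   else if k = 3 then (-p$3 - (p$3*p$3 + p$4*p$4)*p$4) * w$1 + p$4 * w$2 + p$4*p$4 * w$3
                      + (-1 - p$3*p$4) * w$4
   else (-p$4 + (p$3*p$3 + p$4*p$4)*p$3) * w$1 - p$3 * w$2 + (1 - p$3*p$4) * w$3 + p$3*p$3 * w$4)"
  by (simp add: vec4_eq_iff matrix_vector_mult_def sum_4 Jmat_def Let_def)

lemma Jmat_Jmat: "Jmat p *v (Jmat p *v w) = - w"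
  by (simp add: Jmat_mult vec4_eq_iff algebra_simps)

lemma positive_orthonormal_pair_rotation:
  fixes a3 a4 b3 b4 :: real
  assumes "a3*a3 + a4*a4 = 1" "b3*b3 + b4*b4 = 1" "a3*b3 + a4*b4 = 0" "a3*b4 - a4*b3 > 0"
  shows "b3 = - a4 \<and> b4 = a3"
proof -
  define s where "s = a3*b4 - a4*b3"
  have "(a3*a3 + a4*a4) * b3 = a3*(a3*b3 + a4*b4) - a4 * s" unfolding s_def by algebra
  then have b3: "b3 = - a4 * s" using assms by simp
  have "(a3*a3 + a4*a4) * b4 = a4*(a3*b3 + a4*b4) + a3 * s" unfolding s_def by algebra
  then have b4: "b4 = a3 * s" using assms by simp
  have "s * s * (a3*a3 + a4*a4) = 1" using assms(2) b3 b4 by (simp add: algebra_simps)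
  then have "(s - 1) * (s + 1) = 0" using assms(1) by (simp add: algebra_simps)
  moreover have "s > 0" using assms(4) s_def by simp
  ultimately have "s = 1" by simp
  then show ?thesis using b3 b4 by simp
qed

text \<open>The orientation is \<open>\<epsilon> = -1\<close> because \<open>det(Z, \<partial>\<^sub>v, X, Y) = -1\<close>.\<close>

lemma posONframe_ppwave_XY: "posONframe ppwave Zf (\<lambda>p. dv) (-1) p (Xf p) (Yf p)"
  by (simp add: posONframe_def ONframe_def Hsp_def gmet_ppwave Zf_nth dv_nth Xf_nth Yf_nth det_4
      vector_def)

lemma posONframe_ppwave_Jmat:
  assumes "posONframe ppwave Zf (\<lambda>p. dv) (-1) p e1 e2"
  shows "Jmat p *v e1 = e2 \<and> Jmat p *v e2 = - e1"
proof -
  have on: "ONframe ppwave Zf (\<lambda>p. dv) p e1 e2"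
    and det: "- det (vector [Zf p, dv, e1, e2] :: real^4^4) > 0"
    using assms by (auto simp: posONframe_def)
  from on have e1: "e1$1 = 0" "e1$2 = - p$4 * e1$3 + p$3 * e1$4"
    and e2: "e2$1 = 0" "e2$2 = - p$4 * e2$3 + p$3 * e2$4"
    by (auto simp: ONframe_def Hsp_ppwave_iff)
  with on have "e1$3*e1$3 + e1$4*e1$4 = 1" "e2$3*e2$3 + e2$4*e2$4 = 1" "e1$3*e2$3 + e1$4*e2$4 = 0"
    by (auto simp: ONframe_def gmet_ppwave)
  moreover have "e1$3*e2$4 - e1$4*e2$3 > 0"
    using det e1 e2 by (simp add: det_4 vector_def Zf_nth dv_nth)
  ultimately have rot: "e2$3 = - e1$4" "e2$4 = e1$3"
    using positive_orthonormal_pair_rotation by blast+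
  show ?thesis by (simp add: Jmat_mult vec4_eq_iff e1 e2 rot algebra_simps)
qed

lemma ppwave_frame_expansion:
  "w = (- w$1) *\<^sub>R Zf p + (w$2 - (p$3*p$3 + p$4*p$4) * w$1 + p$4 * w$3 - p$3 * w$4) *\<^sub>R dv
     + (w$3 - p$4 * w$1) *\<^sub>R Xf p + (w$4 + p$3 * w$1) *\<^sub>R Yf p"
  by (simp add: vec4_eq_iff Zf_nth dv_nth Xf_nth Yf_nth algebra_simps)

lemma Jop_ppwave: "Jop ppwave Zf (\<lambda>p. dv) (-1) p = (\<lambda>w. Jmat p *v w)"
  unfolding Jop_def
proof (rule the_equality)
  show "linear (\<lambda>w. Jmat p *v w) \<and> Jmat p *v Zf p = dv \<and> Jmat p *v dv = - Zf p \<and>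
     (\<forall>e1 e2. posONframe ppwave Zf (\<lambda>p. dv) (-1) p e1 e2
        \<longrightarrow> Jmat p *v e1 = e2 \<and> Jmat p *v e2 = - e1)"
  proof -
    have "Jmat p *v Zf p = dv" "Jmat p *v dv = - Zf p"
      by (simp_all add: Jmat_mult vec4_eq_iff Zf_nth dv_nth algebra_simps)
    then show ?thesis using posONframe_ppwave_Jmat by simp
  qed
next
  fix Jm
  assume Jm: "linear Jm \<and> Jm (Zf p) = dv \<and> Jm dv = - Zf p \<and>
     (\<forall>e1 e2. posONframe ppwave Zf (\<lambda>p. dv) (-1) p e1 e2 \<longrightarrow> Jm e1 = e2 \<and> Jm e2 = - e1)"
  then have lin: "linear Jm" and "Jm (Xf p) = Yf p" "Jm (Yf p) = - Xf p"
    using posONframe_ppwave_XY by auto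
  show "Jm = (\<lambda>w. Jmat p *v w)"
  proof
    fix w
    let ?r = "p$3*p$3 + p$4*p$4"
    have "Jm w = (- w$1) *\<^sub>R Jm (Zf p) + (w$2 - ?r * w$1 + p$4 * w$3 - p$3 * w$4) *\<^sub>R Jm dv
        + (w$3 - p$4 * w$1) *\<^sub>R Jm (Xf p) + (w$4 + p$3 * w$1) *\<^sub>R Jm (Yf p)"
      by (subst ppwave_frame_expansion[of w p])
        (simp add: linear_add[OF lin] linear_scale[OF lin] linear_diff[OF lin] linear_neg[OF lin])
    also have "\<dots> = Jmat p *v w"
      using Jm \<open>Jm (Xf p) = Yf p\<close> \<open>Jm (Yf p) = - Xf p\<close>
      by (simp add: Jmat_mult vec4_eq_iff Zf_nth dv_nth Xf_nth Yf_nth algebra_simps)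
    finally show "Jm w = Jmat p *v w" .
  qed
qed

section \<open>Admissibility\<close>

lemma nabla0_eq_0_if_bsym_eq_0:
  assumes bsym: "\<And>v w. bsym G X p v w = 0"
    and pos: "\<forall>w\<in>Hsp G kp km p. w \<noteq> 0 \<longrightarrow> gmet G p w w > 0"
  shows "nabla0 G kp km X p v = 0"
  unfolding nabla0_def
proof (rule the_equality)
  have "trH G kp km X p = 0" by (simp add: trH_def bsym split_beta)
  then show "0 \<in> Hsp G kp km p \<and> (\<forall>w\<in>Hsp G kp km p.
      gmet G p 0 w = bsym G X p v w - trH G kp km X p / 2 * gmet G p v w)"
    by (simp add: Hsp_def gmet_def bsym)
next
  fix a
  assume "a \<in> Hsp G kp km p \<and> (\<forall>w\<in>Hsp G kp km p.
      gmet G p a w = bsym G X p v w - trH G kp km X p / 2 * gmet G p v w)"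
  then have "a \<in> Hsp G kp km p" "gmet G p a a = 0" by (auto simp: bsym trH_def split_beta)
  then show "a = 0" using pos by fastforce
qed

lemma semi_riemannian_ppwave: "semi_riemannian ppwave"
proof -
  have "\<forall>i j. exp_poly (\<lambda>p. ppwave p $ i $ j)" by (simp add: forall_4 ppwave_nth)
  then show ?thesis
    by (auto simp: semi_riemannian_def exp_poly_smoothR mat4_eq_iff transpose_def ppwave_nth det_4)
qed

lemma lie_Hsp_ppwave:
  assumes "smoothV W" "\<forall>q. W q \<in> Hsp ppwave Zf (\<lambda>p. dv) q"
  shows "lie Zf W q \<in> Hsp ppwave Zf (\<lambda>p. dv) q \<and> lie (\<lambda>p. dv) W q \<in> Hsp ppwave Zf (\<lambda>p. dv) q"
proof -
  have W: "\<And>q. W q $ 1 = 0" "\<And>q. W q $ 2 = - q$4 * W q $ 3 + q$3 * W q $ 4"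
    using assms(2) by (auto simp: Hsp_ppwave_iff)
  show ?thesis
    by (simp add: Hsp_ppwave_iff lie_def vder_def sum_4 Zf_nth dv_nth W
        smoothV_differentiable[OF assms(1)] algebra_simps)
qed

lemma admissible_ppwave: "admissible ppwave (-1) Zf (\<lambda>p. dv)"
proof -
  have "\<forall>k. exp_poly (\<lambda>p. Zf p $ k)" by (simp add: forall_4 Zf_nth)
  then have smooth_Zf: "smoothV Zf" by (simp add: smoothV_def exp_poly_smoothR)
  have smooth_dv: "smoothV (\<lambda>p. dv)" by (simp add: smoothV_def exp_poly_smoothR)
  have indep: "\<forall>p a b. a *\<^sub>R Zf p + b *\<^sub>R dv = 0 \<longrightarrow> a = 0 \<and> b = 0"
    by (simp add: vec4_eq_iff Zf_nth dv_nth)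
  have pos: "\<forall>p. \<forall>w\<in>Hsp ppwave Zf (\<lambda>p. dv) p. w \<noteq> 0 \<longrightarrow> gmet ppwave p w w > 0"
    using Hsp_ppwave_pos by blast
  have nabla0: "nabla0 ppwave Zf (\<lambda>p. dv) Zf p v = 0" "nabla0 ppwave Zf (\<lambda>p. dv) (\<lambda>p. dv) p v = 0"
    for p v
    using nabla0_eq_0_if_bsym_eq_0[OF bsym_ppwave_Zf pos[THEN spec]]
      nabla0_eq_0_if_bsym_eq_0[OF bsym_ppwave_dv pos[THEN spec]] by blast+
  have grad_dv: "\<exists>l tau. smoothR l \<and> smoothR tau \<and> (\<forall>p. dv = l p *\<^sub>R grad ppwave tau p)"
    by (rule exI[of _ "\<lambda>_. 1"], rule exI[of _ cu])
      (simp add: exp_poly_smoothR cu_eq_coord grad_ppwave_cu[unfolded cu_eq_coord])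
  have "(\<lambda>q. gmet ppwave q (Zf q) dv) = (\<lambda>q. -1)" "(\<lambda>q. gmet ppwave q (Zf q) (Zf q)) = (\<lambda>q. 0)"
    by (simp_all add: gmet_ppwave Zf_nth dv_nth algebra_simps)
  moreover have "grad ppwave (\<lambda>q. c) p = 0" for c p
    by (simp add: grad_def zero_vec_def[symmetric])
  ultimately show ?thesis
    unfolding admissible_def
    using semi_riemannian_ppwave smooth_Zf smooth_dv indep pos lie_Hsp_ppwave grad_dv
    by (simp add: nabla0 Jop_ppwave Vsp_def span_zero)
qed

section \<open>The Kaehler structure\<close>

definition Fmat :: "pt \<Rightarrow> real^4^4" where
  "Fmat p = (\<chi> i j. exp (p$1) * (
     if i = 1 then (if j = 1 then 0 else if j = 2 then -1 else if j = 3 then -p$4 - 2*p$3 else p$3 - 2*p$4)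
     else if i = 2 then (if j = 1 then 1 else 0)
     else if i = 3 then (if j = 1 then p$4 + 2*p$3 else if j = 4 then 2 else 0)
     else (if j = 1 then 2*p$4 - p$3 else if j = 3 then -2 else 0)))"

lemma flat_ppwave_Zf_nth: "flat ppwave Zf q $ j =
    (if j = 1 then q$3*q$3 + q$4*q$4 else if j = 2 then -1 else if j = 3 then - q$4 else q$3)"
  using exhaust_4[of j] by (auto simp: flat_def gmet_ppwave Zf_nth axis_def)

lemma dform1_eq_Fmat: "dform1 (\<lambda>q. exp (cu q) *\<^sub>R flat ppwave Zf q) p v w = v \<bullet> (Fmat p *v w)"
  by (simp add: dform1_def flat_ppwave_Zf_nth cu_def sum_4 Fmat_def inner_vec_def
      matrix_vector_mult_def algebra_simps)

lemma transpose_Fmat: "transpose (Fmat p) = - Fmat p"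
  by (simp add: mat4_eq_iff transpose_def Fmat_def algebra_simps)

lemma transpose_Fmat_Jmat: "transpose (Fmat p ** Jmat p) = Fmat p ** Jmat p"
  by (simp add: mat4_eq_iff transpose_def matrix_matrix_mult_def sum_4 Fmat_def Jmat_def Let_def
      algebra_simps)

lemma Fmat_Jmat_quadratic_form: "v \<bullet> (Fmat p *v (Jmat p *v v)) = exp (p$1) *
    ((v$2 - (p$3*p$3 + p$4*p$4) * v$1 + p$4 * v$3 - p$3 * v$4)\<^sup>2
     + (v$1)\<^sup>2 + 2 * (v$3 - p$4 * v$1)\<^sup>2 + 2 * (v$4 + p$3 * v$1)\<^sup>2)"
  by (simp add: inner_vec_def matrix_vector_mult_def sum_4 Fmat_def Jmat_def Let_def power2_eq_square
      algebra_simps)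

lemma Fmat_Jmat_pos:
  assumes "v \<noteq> 0"
  shows "v \<bullet> (Fmat p *v (Jmat p *v v)) > 0"
proof -
  let ?a = "v$2 - (p$3*p$3 + p$4*p$4) * v$1 + p$4 * v$3 - p$3 * v$4"
    and ?c = "v$3 - p$4 * v$1" and ?d = "v$4 + p$3 * v$1"
  have "?a \<noteq> 0 \<or> v$1 \<noteq> 0 \<or> ?c \<noteq> 0 \<or> ?d \<noteq> 0"
    using assms by (auto simp: vec4_eq_iff)
  then have "0 < ?a\<^sup>2 \<or> 0 < (v$1)\<^sup>2 \<or> 0 < ?c\<^sup>2 \<or> 0 < ?d\<^sup>2" by simp
  moreover have "0 \<le> ?a\<^sup>2" "0 \<le> (v$1)\<^sup>2" "0 \<le> ?c\<^sup>2" "0 \<le> ?d\<^sup>2" by simp_all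
  ultimately have "?a\<^sup>2 + (v$1)\<^sup>2 + 2 * ?c\<^sup>2 + 2 * ?d\<^sup>2 > 0" by linarith
  then show ?thesis by (simp add: Fmat_Jmat_quadratic_form)
qed

definition Jmat_dx :: "pt \<Rightarrow> real^4^4" where
  "Jmat_dx p = (let x = p$3; y = p$4 in (\<chi> k j.
     if k = 1 then (if j = 1 then -2*x else if j = 4 then -1 else 0)
     else if k = 2 then (if j = 3 then 1 else 0)
     else if k = 3 then (if j = 1 then -1 - 2*x*y else if j = 4 then -y else 0)
     else (if j = 1 then 3*x*x + y*y else if j = 2 then -1 else if j = 3 then -y else 2*x)))"

definition Jmat_dy :: "pt \<Rightarrow> real^4^4" where
  "Jmat_dy p = (let x = p$3; y = p$4 in (\<chi> k j.
     if k = 1 then (if j = 1 then -2*y else if j = 3 then 1 else 0)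
     else if k = 2 then (if j = 4 then 1 else 0)
     else if k = 3 then (if j = 1 then -x*x - 3*y*y else if j = 2 then 1 else if j = 3 then 2*y else -x)
     else (if j = 1 then -1 + 2*x*y else if j = 3 then -x else 0)))"

lemma mat_dir_deriv_Jmat: "mat_dir_deriv Jmat p v = v$3 *\<^sub>R Jmat_dx p + v$4 *\<^sub>R Jmat_dy p"
  by (simp add: mat4_eq_iff mat_dir_deriv_def sum_4 Jmat_def Let_def Jmat_dx_def Jmat_dy_def algebra_simps)

lemma Jmat_integrable: "mat_dir_deriv Jmat p (Jmat p *v a) *v b - mat_dir_deriv Jmat p (Jmat p *v b) *v a
    + Jmat p *v (mat_dir_deriv Jmat p b *v a) - Jmat p *v (mat_dir_deriv Jmat p a *v b) = 0"
  by (simp add: mat_dir_deriv_Jmat Jmat_def vec4_eq_iff matrix_vector_mult_def sum_4 Jmat_dx_def Jmat_dy_def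
      Let_def algebra_simps)

definition Fmat_dx :: "real^4^4" where
  "Fmat_dx = (\<chi> i j. if i = 1 then (if j = 3 then -2 else if j = 4 then 1 else 0)
     else if i = 3 then (if j = 1 then 2 else 0) else if i = 4 then (if j = 1 then -1 else 0) else 0)"

definition Fmat_dy :: "real^4^4" where
  "Fmat_dy = (\<chi> i j. if i = 1 then (if j = 3 then -1 else if j = 4 then -2 else 0)
     else if i = 3 then (if j = 1 then 1 else 0) else if i = 4 then (if j = 1 then 2 else 0) else 0)"

lemma mat_dir_deriv_Fmat: "mat_dir_deriv Fmat p v = v$1 *\<^sub>R Fmat p + exp (p$1) *\<^sub>R (v$3 *\<^sub>R Fmat_dx + v$4 *\<^sub>R Fmat_dy)"
  by (simp add: mat4_eq_iff mat_dir_deriv_def sum_4 Fmat_def Fmat_dx_def Fmat_dy_def algebra_simps)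

lemma Fmat_closed: "b \<bullet> (mat_dir_deriv Fmat p a *v c) - a \<bullet> (mat_dir_deriv Fmat p b *v c) + a \<bullet> (mat_dir_deriv Fmat p c *v b) = 0"
  by (simp add: mat_dir_deriv_Fmat inner_vec_def matrix_vector_mult_def sum_4 Fmat_def Fmat_dx_def Fmat_dy_def
      algebra_simps)

lemma exp_poly_Jmat: "exp_poly (\<lambda>q. Jmat q $ k $ j)"
proof -
  have "\<forall>k j. exp_poly (\<lambda>q. Jmat q $ k $ j)" by (simp add: forall_4 Jmat_def Let_def)
  then show ?thesis by blast
qed

lemma exp_poly_Fmat: "exp_poly (\<lambda>q. Fmat q $ k $ j)"
proof -
  have "\<forall>k j. exp_poly (\<lambda>q. Fmat q $ k $ j)" by (simp add: forall_4 Fmat_def)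
  then show ?thesis by blast
qed

lemma Fmat_Jmat_invariant: "(Jmat p *v a) \<bullet> (Fmat p *v (Jmat p *v b)) = a \<bullet> (Fmat p *v b)"
  by (rule inner_complex_structure_invariant[OF Jmat_Jmat transpose_Fmat transpose_Fmat_Jmat])

lemma kaehler_ppwave:
  "kaehler (\<lambda>p v w. dform1 (\<lambda>q. exp (cu q) *\<^sub>R flat ppwave Zf q) p v (Jop ppwave Zf (\<lambda>p. dv) (-1) p w))
      (Jop ppwave Zf (\<lambda>p. dv) (-1))"
  unfolding kaehler_def Jop_ppwave dform1_eq_Fmat
proof (intro conjI)
  have "\<forall>i k. exp_poly (\<lambda>p. (Jmat p *v axis i 1) $ k)"
    by (simp add: forall_4 Jmat_mult axis_def)
  then show "\<forall>i k. smoothR (\<lambda>p. (Jmat p *v axis i 1) $ k)" by (simp add: exp_poly_smoothR)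
  have "\<forall>i j. exp_poly (\<lambda>p. axis i 1 \<bullet> (Fmat p *v (Jmat p *v axis j 1)))"
    by (simp add: forall_4 inner_vec_def matrix_vector_mult_def sum_4 axis_def exp_poly_Fmat exp_poly_Jmat)
  then show "\<forall>i j. smoothR (\<lambda>p. axis i 1 \<bullet> (Fmat p *v (Jmat p *v axis j 1)))"
    by (simp add: exp_poly_smoothR)
  show "\<forall>p. linear ((*v) (Jmat p)) \<and> (\<forall>v. Jmat p *v (Jmat p *v v) = - v)"
    by (simp add: Jmat_Jmat)
  show "\<forall>p. bilinear (\<lambda>v w. v \<bullet> (Fmat p *v (Jmat p *v w))) \<and>
      (\<forall>v w. v \<bullet> (Fmat p *v (Jmat p *v w)) = w \<bullet> (Fmat p *v (Jmat p *v v))) \<and>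
      (\<forall>v. v \<noteq> 0 \<longrightarrow> 0 < v \<bullet> (Fmat p *v (Jmat p *v v)))"
    using inner_matrix_symmetric[OF transpose_Fmat_Jmat] Fmat_Jmat_pos
    by (simp add: matrix_vector_mul_assoc bilinear_def linear_iff inner_add_left inner_add_right
        matrix_vector_right_distrib matrix_vector_mult_scaleR)
  show "\<forall>p v w. (Jmat p *v v) \<bullet> (Fmat p *v (Jmat p *v (Jmat p *v w))) = v \<bullet> (Fmat p *v (Jmat p *v w))"
    by (simp add: Fmat_Jmat_invariant)
  show "\<forall>X Y. smoothV X \<and> smoothV Y \<longrightarrow>
      (let JX = \<lambda>q. Jmat q *v X q; JY = \<lambda>q. Jmat q *v Y q
       in \<forall>p. lie JX JY p - Jmat p *v lie JX Y p - Jmat p *v lie X JY p - lie X Y p = 0)"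
    unfolding Let_def
    by (intro allI impI nijenhuis_matrix_field_eq_0 exp_poly_differentiable[OF exp_poly_Jmat]
        Jmat_Jmat Jmat_integrable) (auto intro: smoothV_differentiable)
  show "\<forall>X Y Z. smoothV X \<and> smoothV Y \<and> smoothV Z \<longrightarrow>
      (let om = \<lambda>A B q. (Jmat q *v A q) \<bullet> (Fmat q *v (Jmat q *v B q))
       in \<forall>p. vder X (om Y Z) p - vder Y (om X Z) p + vder Z (om X Y) p - om (lie X Y) Z p +
              om (lie X Z) Y p - om (lie Y Z) X p = 0)"
    unfolding Let_def Fmat_Jmat_invariant
    by (intro allI impI exterior_derivative_matrix_two_form_eq_0
        exp_poly_differentiable[OF exp_poly_Fmat] transpose_Fmat Fmat_closed)
      (auto intro: smoothV_differentiable)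
qed

theorem proposition10p1:
  shows "grad ppwave cu = (\<lambda>p. dv) \<and>
    (\<exists>eps.
      (\<forall>p. Jop ppwave Zf (grad ppwave cu) eps p (Xf p) = Yf p) \<and>
      admissible ppwave eps Zf (grad ppwave cu) \<and>
      kaehler
        (\<lambda>p v w. dform1 (\<lambda>q. exp (cu q) *\<^sub>R flat ppwave Zf q) p v
                   (Jop ppwave Zf (grad ppwave cu) eps p w))
        (Jop ppwave Zf (grad ppwave cu) eps))"
proof -
  have "Jop ppwave Zf (\<lambda>p. dv) (-1) p (Xf p) = Yf p" for p
    using posONframe_ppwave_Jmat[OF posONframe_ppwave_XY] by (simp add: Jop_ppwave)
  then show ?thesis
    unfolding grad_ppwave_cu using admissible_ppwave kaehler_ppwave by blast
qed

end
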